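(* Let $\Omega$, $\gamma\in(0,1)$ and $\varphi:\mathcal H\to\Omega$ be as follows: $\Omega\subset\{|z|>e^\gamma\}$ is an unbounded simply connected domain, $\varphi$ is conformal with $|\varphi(\xi_n)|\to\infty$ whenever $|\xi_n|\to\infty$, and there is $M$ with $|\varphi(\xi)|\le M|\varphi(\xi')|$ for all $\xi,\xi'\in Q_T\setminus Q_{T/8}$ and all large $T$. Let $t\in\mathbb R$ and $R\ge\gamma$. Then $$\limsup_{r\to0}\beta_{\varphi_{R/r}}(r,t)=\limsup_{T\to+\infty}\beta_{\varphi_T}(1/T,t),$$ and this quantity is finite and does not depend on $R\ge\gamma$.
   Context: $\mathcal H=\{\Re\xi>0\}$; $Q_T=\{0<\Re\xi<4T,\ |\Im\xi|<4T\}$; $\varphi_T(\xi)=\varphi(T\xi)/|\varphi(T)|$; for a conformal map $h$ on $Q_2$, $r\in(0,1)$, $t\in\mathbb R$: $\beta_h(r,t)=\frac{\log\int_I|h'(r+iy)|^t\,dy}{\log(1/r)}$ with $I=[-2,-1]\cup[1,2]$. *)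

theory Defs
  imports "HOL-Complex_Analysis.Complex_Analysis"
begin

definition halfplane :: "complex set" where
  "halfplane = {\<xi>. Re \<xi> > 0}"

definition Qbox :: "real \<Rightarrow> complex set" where
  "Qbox T = {\<xi>. 0 < Re \<xi> \<and> Re \<xi> < 4 * T \<and> \<bar>Im \<xi>\<bar> < 4 * T}"

definition phiT :: "(complex \<Rightarrow> complex) \<Rightarrow> real \<Rightarrow> complex \<Rightarrow> complex" where
  "phiT \<phi> T = (\<lambda>\<xi>. \<phi> (of_real T * \<xi>) / of_real (cmod (\<phi> (of_real T))))"

definition Iset :: "real set" where
  "Iset = {-2..-1} \<union> {1..2}"

definition beta :: "(complex \<Rightarrow> complex) \<Rightarrow> real \<Rightarrow> real \<Rightarrow> real" where
  "beta h r t = ln (integral Iset (\<lambda>y. cmod (deriv h (Complex r y)) powr t)) / ln (1 / r)"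

end

theory Submission
  imports Defs
begin

text \<open>Koebe-type estimates, obtained from Landau's theorem, give
  \<open>\<bar>\<phi>'\<bar> Re \<xi> \<le> C \<bar>\<phi>\<bar>\<close> and \<open>\<bar>\<phi>''\<bar> Re \<xi> \<le> K \<bar>\<phi>'\<bar>\<close> on the half-plane.
  Hence \<open>ln \<bar>\<phi>\<bar>\<close> and \<open>ln \<bar>\<phi>'\<bar>\<close> change by \<open>O(\<bar>ln x\<^sub>1 - ln x\<^sub>2\<bar>)\<close> along horizontal
  segments and by \<open>O(1)\<close> along vertical segments of length comparable to \<open>Re \<xi>\<close>. So the
  logarithm of the integral defining \<open>\<beta>\<close> at scale \<open>T\<close> is \<open>O(ln T)\<close>, which makes the limsup
  finite, and moving the abscissa from \<open>1\<close> to \<open>R\<close> changes it only by \<open>O(\<bar>ln R\<bar>)\<close>, which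
  disappears after division by \<open>ln T\<close>; the substitution \<open>T = R / r\<close> then identifies the two limsups.\<close>

lemma Landau_ball:
  obtains c :: real where "c > 0" and
    "\<And>f a \<rho>. f holomorphic_on ball a \<rho> \<Longrightarrow> 0 < \<rho> \<Longrightarrow> f a = -1 \<Longrightarrow>
       (\<And>z. z \<in> ball a \<rho> \<Longrightarrow> f z \<noteq> 0 \<and> f z \<noteq> 1) \<Longrightarrow> cmod (deriv f a) * \<rho> \<le> c"
proof -
  obtain Rf where Rf_pos: "\<And>z. 0 < Rf z" and Landau:
    "\<And>f. f holomorphic_on cball 0 (Rf (f 0)) \<Longrightarrow>
          (\<And>z. norm z \<le> Rf (f 0) \<Longrightarrow> f z \<noteq> 0 \<and> f z \<noteq> 1) \<Longrightarrow> norm (deriv f 0) < 1"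
    using Landau_Picard by metis
  define R1 where "R1 = Rf (-1)"
  have R1: "R1 > 0" using Rf_pos by (simp add: R1_def)
  show ?thesis
  proof (rule that[of "2 * R1"])
    show "2 * R1 > 0" using R1 by simp
    fix f a \<rho>
    assume holf: "f holomorphic_on ball a \<rho>" and \<rho>: "0 < \<rho>" and fa: "f a = -1"
      and omits: "\<And>z. z \<in> ball a \<rho> \<Longrightarrow> f z \<noteq> 0 \<and> f z \<noteq> 1"
    define s where "s = \<rho> / (2 * R1)"
    have s: "s > 0" using \<rho> R1 by (simp add: s_def)
    define g where "g u = f (a + of_real s * u)" for u
    have in_ball: "a + of_real s * u \<in> ball a \<rho>" if "norm u \<le> R1" for u
    proof -
      have "norm (of_real s * u) \<le> s * R1" using that s by (simp add: norm_mult mult_left_mono)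
      also have "\<dots> < \<rho>" using \<rho> R1 by (simp add: s_def)
      finally show ?thesis by (simp add: dist_norm)
    qed
    have "(\<lambda>u. a + of_real s * u) ` cball 0 R1 \<subseteq> ball a \<rho>" using in_ball by auto
    then have "(f \<circ> (\<lambda>u. a + of_real s * u)) holomorphic_on cball 0 R1"
      by (intro holomorphic_on_compose_gen[OF _ holf] holomorphic_intros)
    then have "g holomorphic_on cball 0 R1" by (simp add: o_def g_def[abs_def])
    moreover have "(f has_field_derivative deriv f a) (at a)"
      using holomorphic_derivI[OF holf open_ball] \<rho> by simp
    then have "(g has_field_derivative deriv f a * of_real s) (at 0)"
      unfolding g_def by (auto intro!: derivative_eq_intros DERIV_chain2[where f = f])
    ultimately have "norm (deriv g 0) < 1" and "deriv g 0 = deriv f a * of_real s"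
      using Landau[of g] in_ball omits by (auto simp: fa R1_def g_def DERIV_imp_deriv)
    then have "norm (deriv f a * of_real s) < 1" by simp
    then have "cmod (deriv f a) * s < 1" using s by (simp add: norm_mult)
    then have "cmod (deriv f a) * \<rho> < 2 * R1"
      using R1 by (simp add: s_def field_simps)
    then show "cmod (deriv f a) * \<rho> \<le> 2 * R1" by simp
  qed
qed

lemma deriv_eq_mult_deriv_log:
  assumes holg: "g holomorphic_on S" and S: "open S" and eg: "\<And>z. z \<in> S \<Longrightarrow> exp (g z) = f z"
    and z: "z \<in> S"
  shows "deriv f z = f z * deriv g z"
proof -
  have "((\<lambda>z. exp (g z)) has_field_derivative exp (g z) * deriv g z) (at z)"
    using holomorphic_derivI[OF holg S z] by (auto intro!: derivative_eq_intros)
  then have "(f has_field_derivative exp (g z) * deriv g z) (at z)"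
    by (rule has_field_derivative_transform_within_open[OF _ S z eg])
  then show ?thesis using eg[OF z] by (simp add: DERIV_imp_deriv)
qed

lemma univalent_normalised_sqrt:
  assumes holF: "F holomorphic_on ball a \<rho>" and inj: "inj_on F (ball a \<rho>)" and \<rho>: "0 < \<rho>"
    and w: "w \<notin> F ` ball a \<rho>"
  obtains G where "G holomorphic_on ball a \<rho>" and "G a = -1"
    and "\<And>z. z \<in> ball a \<rho> \<Longrightarrow> G z \<noteq> 0 \<and> G z \<noteq> 1"
    and "deriv F a = - 2 * (F a - w) * deriv G a"
proof -
  have a: "a \<in> ball a \<rho>" using \<rho> by simp
  have "(\<lambda>z. F z - w) holomorphic_on ball a \<rho>" using holF by (intro holomorphic_intros)
  moreover have "F z - w \<noteq> 0" if "z \<in> ball a \<rho>" for z using w that by force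
  ultimately obtain g where holg: "g holomorphic_on ball a \<rho>"
    and eg: "\<And>z. z \<in> ball a \<rho> \<Longrightarrow> exp (g z) = F z - w"
    using holomorphic_logarithm_exists[OF convex_ball open_ball _ _ a, of "\<lambda>z. F z - w"]
    by blast
  define G where "G z = - exp (g z / 2) / exp (g a / 2)" for z
  show ?thesis
  proof (rule that)
    show "G holomorphic_on ball a \<rho>"
      unfolding G_def[abs_def] using holg by (intro holomorphic_intros) auto
    show "G a = -1" by (simp add: G_def)
    fix z assume z: "z \<in> ball a \<rho>"
    show "G z \<noteq> 0 \<and> G z \<noteq> 1"
    proof
      show "G z \<noteq> 0" by (simp add: G_def)
      show "G z \<noteq> 1"
      proof
        assume "G z = 1"
        then have sq: "exp (g z / 2) = - exp (g a / 2)"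
          by (auto simp: G_def field_simps) (metis minus_minus)
        have sq_exp: "exp (g u) = exp (g u / 2) ^ 2" for u
          by (simp add: power2_eq_square flip: exp_add)
        have "exp (g z) = exp (g a)" by (simp only: sq_exp sq power2_minus)
        then have "F z = F a" using eg[OF z] eg[OF a] by simp
        then have "z = a" using inj z a by (auto dest: inj_onD)
        then show False using sq by simp
      qed
    qed
  next
    have "((\<lambda>z. exp (g z / 2)) has_field_derivative exp (g a / 2) * (deriv g a / 2)) (at a)"
      using holomorphic_derivI[OF holg open_ball a] by (auto intro!: derivative_eq_intros)
    then have "(G has_field_derivative - (exp (g a / 2) * (deriv g a / 2)) / exp (g a / 2)) (at a)"
      unfolding G_def[abs_def] by (rule DERIV_cdivide[OF DERIV_minus])
    then have "deriv g a = - 2 * deriv G a" by (simp add: DERIV_imp_deriv)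
    have "deriv F a = deriv (\<lambda>z. F z - w) a"
      using holomorphic_on_imp_differentiable_at[OF holF open_ball a] by simp
    also have "\<dots> = (F a - w) * deriv g a"
      by (rule deriv_eq_mult_deriv_log[OF holg open_ball eg a])
    finally show "deriv F a = - 2 * (F a - w) * deriv G a"
      using \<open>deriv g a = - 2 * deriv G a\<close> by (simp add: algebra_simps)
  qed
qed

text \<open>The normalised square root of \<open>F - w\<close> omits \<open>0\<close> and \<open>1\<close>, so Landau's theorem bounds
  its derivative.\<close>
lemma univalent_deriv_le_omitted_dist:
  obtains C :: real where "C > 0" and
    "\<And>F a \<rho> w. F holomorphic_on ball a \<rho> \<Longrightarrow> inj_on F (ball a \<rho>) \<Longrightarrow> 0 < \<rho> \<Longrightarrow>
       w \<notin> F ` ball a \<rho> \<Longrightarrow> cmod (deriv F a) * \<rho> \<le> C * cmod (F a - w)"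
proof -
  obtain c where c: "c > 0" and Landau:
    "\<And>f a \<rho>. f holomorphic_on ball a \<rho> \<Longrightarrow> 0 < \<rho> \<Longrightarrow> f a = -1 \<Longrightarrow>
       (\<And>z. z \<in> ball a \<rho> \<Longrightarrow> f z \<noteq> 0 \<and> f z \<noteq> 1) \<Longrightarrow> cmod (deriv f a) * \<rho> \<le> c"
    using Landau_ball by metis
  show ?thesis
  proof (rule that[of "2 * c"])
    show "2 * c > 0" using c by simp
    fix F a \<rho> w
    assume holF: "F holomorphic_on ball a \<rho>" and inj: "inj_on F (ball a \<rho>)" and \<rho>: "0 < \<rho>"
      and w: "w \<notin> F ` ball a \<rho>"
    obtain G where holG: "G holomorphic_on ball a \<rho>" and "G a = -1"
      and omits: "\<And>z. z \<in> ball a \<rho> \<Longrightarrow> G z \<noteq> 0 \<and> G z \<noteq> 1"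
      and dF: "deriv F a = - 2 * (F a - w) * deriv G a"
      using univalent_normalised_sqrt[OF holF inj \<rho> w] by blast
    have "cmod (deriv F a) * \<rho> = 2 * cmod (F a - w) * (cmod (deriv G a) * \<rho>)"
      unfolding dF norm_mult by simp
    also have "\<dots> \<le> 2 * cmod (F a - w) * c"
      using Landau[OF holG \<rho> \<open>G a = -1\<close> omits] by (intro mult_left_mono) auto
    finally show "cmod (deriv F a) * \<rho> \<le> 2 * c * cmod (F a - w)" by (simp add: mult_ac)
  qed
qed

lemma deriv2_eq_inverse_deriv2:
  assumes holF: "F holomorphic_on S" and S: "open S" and a: "a \<in> S"
    and holG: "G holomorphic_on F ` S" and FS: "open (F ` S)"
    and inverse: "\<And>z. z \<in> S \<Longrightarrow> deriv F z * deriv G (F z) = 1"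
  shows "deriv (deriv F) a = - (deriv F a ^ 3) * deriv (deriv G) (F a)"
proof -
  have dF: "(F has_field_derivative deriv F a) (at a)"
    using holomorphic_derivI[OF holF S a] .
  have d2F: "(deriv F has_field_derivative deriv (deriv F) a) (at a)"
    using holomorphic_derivI[OF holomorphic_deriv[OF holF S] S a] .
  have d2G: "(deriv G has_field_derivative deriv (deriv G) (F a)) (at (F a))"
    using holomorphic_derivI[OF holomorphic_deriv[OF holG FS] FS] a by blast
  have "((\<lambda>z. deriv F z * deriv G (F z)) has_field_derivative
      deriv (deriv F) a * deriv G (F a) + deriv (deriv G) (F a) * deriv F a * deriv F a) (at a)"
    using DERIV_mult[OF d2F DERIV_chain2[OF d2G dF]] .
  moreover have "((\<lambda>z. deriv F z * deriv G (F z)) has_field_derivative 0) (at a)"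
    by (rule has_field_derivative_transform_within_open[OF DERIV_const S a]) (use inverse in simp)
  ultimately have "deriv (deriv F) a * deriv G (F a) + deriv (deriv G) (F a) * deriv F a * deriv F a = 0"
    by (rule DERIV_unique)
  moreover have "deriv F a \<noteq> 0" using inverse[OF a] by auto
  moreover have "deriv G (F a) = 1 / deriv F a"
    using inverse[OF a] calculation(2) by (simp add: eq_divide_eq mult.commute)
  ultimately show ?thesis by (simp add: field_simps power3_eq_cube add_eq_0_iff)
qed

lemma univalent_image_contains_cball:
  obtains c :: real where "c > 0" and
    "\<And>F a \<rho>. F holomorphic_on ball a \<rho> \<Longrightarrow> inj_on F (ball a \<rho>) \<Longrightarrow> 0 < \<rho> \<Longrightarrow>
       cball (F a) (c * cmod (deriv F a) * \<rho>) \<subseteq> F ` ball a \<rho>"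
proof -
  obtain C :: real where C: "C > 0" and koebe:
    "\<And>F a \<rho> w. F holomorphic_on ball a \<rho> \<Longrightarrow> inj_on F (ball a \<rho>) \<Longrightarrow> 0 < \<rho> \<Longrightarrow>
       w \<notin> F ` ball a \<rho> \<Longrightarrow> cmod (deriv F a) * \<rho> \<le> C * cmod (F a - w)"
    using univalent_deriv_le_omitted_dist by metis
  show ?thesis
  proof (rule that[of "1 / (2 * C)"])
    show "1 / (2 * C) > 0" using C by simp
    fix F a \<rho>
    assume holF: "F holomorphic_on ball a \<rho>" and inj: "inj_on F (ball a \<rho>)" and \<rho>: "0 < \<rho>"
    have "deriv F a \<noteq> 0"
      using holomorphic_injective_imp_regular[OF holF open_ball inj] \<rho> by simp
    then have pos: "cmod (deriv F a) * \<rho> > 0" using \<rho> by simp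
    show "cball (F a) (1 / (2 * C) * cmod (deriv F a) * \<rho>) \<subseteq> F ` ball a \<rho>"
    proof
      fix w assume w: "w \<in> cball (F a) (1 / (2 * C) * cmod (deriv F a) * \<rho>)"
      show "w \<in> F ` ball a \<rho>"
      proof (rule ccontr)
        assume "w \<notin> F ` ball a \<rho>"
        from koebe[OF holF inj \<rho> this] have "cmod (deriv F a) * \<rho> \<le> C * cmod (F a - w)" .
        also have "\<dots> \<le> cmod (deriv F a) * \<rho> / 2" using w C by (simp add: dist_norm field_simps)
        finally show False using pos by linarith
      qed
    qed
  qed
qed

lemma univalent_deriv2_bound:
  obtains K :: real where "K > 0" and
    "\<And>F a \<rho>. F holomorphic_on ball a \<rho> \<Longrightarrow> inj_on F (ball a \<rho>) \<Longrightarrow> 0 < \<rho> \<Longrightarrow>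
       cmod (deriv (deriv F) a) * \<rho> \<le> K * cmod (deriv F a)"
proof -
  obtain c :: real where c: "c > 0" and image:
    "\<And>F a \<rho>. F holomorphic_on ball a \<rho> \<Longrightarrow> inj_on F (ball a \<rho>) \<Longrightarrow> 0 < \<rho> \<Longrightarrow>
       cball (F a) (c * cmod (deriv F a) * \<rho>) \<subseteq> F ` ball a \<rho>"
    using univalent_image_contains_cball by metis
  show ?thesis
  proof (rule that[of "2 / c^2"])
    show "2 / c^2 > 0" using c by simp
    fix F a \<rho>
    assume holF: "F holomorphic_on ball a \<rho>" and inj: "inj_on F (ball a \<rho>)" and \<rho>: "0 < \<rho>"
    have a: "a \<in> ball a \<rho>" using \<rho> by simp
    define d where "d = deriv F a"
    have d: "d \<noteq> 0"
      unfolding d_def using holomorphic_injective_imp_regular[OF holF open_ball inj a] .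
    define r where "r = c * cmod d * \<rho>"
    have r: "r > 0" using d \<rho> c by (simp add: r_def)
    have image: "cball (F a) r \<subseteq> F ` ball a \<rho>" unfolding r_def d_def by (rule image[OF holF inj \<rho>])
    obtain G where holG: "G holomorphic_on F ` ball a \<rho>"
      and inverse: "\<And>z. z \<in> ball a \<rho> \<Longrightarrow> deriv F z * deriv G (F z) = 1"
      and GF: "\<And>z. z \<in> ball a \<rho> \<Longrightarrow> G (F z) = z"
      using holomorphic_has_inverse[OF holF open_ball inj] by metis
    text \<open>The inverse maps the disc into \<open>ball a \<rho>\<close>, so Cauchy's estimate bounds its second derivative.\<close>
    have "cmod ((deriv ^^ 2) G (F a)) \<le> fact 2 * \<rho> / r ^ 2"
    proof (rule Cauchy_higher_deriv_bound[where y = a])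
      show "G holomorphic_on ball (F a) r"
        using holG image ball_subset_cball by (meson holomorphic_on_subset order_trans)
      show "continuous_on (cball (F a) r) G"
        using holG image holomorphic_on_imp_continuous_on holomorphic_on_subset by blast
      fix w assume "w \<in> ball (F a) r"
      then obtain z where "z \<in> ball a \<rho>" "w = F z" using image ball_subset_cball by blast
      then show "G w \<in> ball a \<rho>" using GF by simp
    qed (use r in auto)
    then have G2: "cmod (deriv (deriv G) (F a)) \<le> 2 * \<rho> / r ^ 2"
      by (simp add: numeral_2_eq_2)
    have "deriv (deriv F) a = - (d ^ 3) * deriv (deriv G) (F a)"
      unfolding d_def using open_mapping_thm3[OF holF open_ball inj] inverse
      by (intro deriv2_eq_inverse_deriv2[OF holF open_ball a holG])
    then have "cmod (deriv (deriv F) a) = cmod d ^ 3 * cmod (deriv (deriv G) (F a))"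
      by (simp add: norm_mult norm_power)
    also have "\<dots> \<le> cmod d ^ 3 * (2 * \<rho> / r ^ 2)" by (intro mult_left_mono G2) auto
    also have "\<dots> = 2 / c^2 * cmod d / \<rho>"
      using d \<rho> c by (simp add: r_def field_simps power2_eq_square power3_eq_cube)
    finally show "cmod (deriv (deriv F) a) * \<rho> \<le> 2 / c^2 * cmod (deriv F a)"
      using \<rho> c by (simp add: d_def[symmetric] field_simps)
  qed
qed

lemma open_halfplane: "open halfplane"
  unfolding halfplane_def by (simp add: open_halfspace_Re_gt)

lemma convex_halfplane: "convex halfplane"
  unfolding halfplane_def by (rule convex_halfspace_Re_gt)

lemma ball_Re_subset_halfplane: "ball \<xi> (Re \<xi>) \<subseteq> halfplane"
proof
  fix z assume "z \<in> ball \<xi> (Re \<xi>)"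
  then have "cmod (\<xi> - z) < Re \<xi>" by (simp add: dist_norm)
  moreover have "\<bar>Re (\<xi> - z)\<bar> \<le> cmod (\<xi> - z)" by (rule abs_Re_le_cmod)
  ultimately show "z \<in> halfplane" by (simp add: halfplane_def)
qed

lemma halfplane_deriv_bound:
  assumes holF: "F holomorphic_on halfplane" and inj: "inj_on F halfplane"
    and omits: "0 \<notin> F ` halfplane"
  obtains C :: real where
    "\<And>\<xi>. \<xi> \<in> halfplane \<Longrightarrow> cmod (deriv F \<xi>) * Re \<xi> \<le> C * cmod (F \<xi>)"
proof -
  obtain C :: real where C: "C > 0" and koebe:
    "\<And>F a \<rho> w. F holomorphic_on ball a \<rho> \<Longrightarrow> inj_on F (ball a \<rho>) \<Longrightarrow> 0 < \<rho> \<Longrightarrow>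
       w \<notin> F ` ball a \<rho> \<Longrightarrow> cmod (deriv F a) * \<rho> \<le> C * cmod (F a - w)"
    using univalent_deriv_le_omitted_dist by metis
  show ?thesis
  proof (rule that[of C])
    fix \<xi> assume "\<xi> \<in> halfplane"
    then have "0 < Re \<xi>" by (simp add: halfplane_def)
    moreover have "F holomorphic_on ball \<xi> (Re \<xi>)" and "inj_on F (ball \<xi> (Re \<xi>))"
      and "0 \<notin> F ` ball \<xi> (Re \<xi>)"
      using holF inj omits ball_Re_subset_halfplane
      by (auto intro: holomorphic_on_subset inj_on_subset)
    ultimately show "cmod (deriv F \<xi>) * Re \<xi> \<le> C * cmod (F \<xi>)"
      using koebe[of F \<xi> "Re \<xi>" 0] by simp
  qed
qed

lemma halfplane_deriv2_bound:
  assumes holF: "F holomorphic_on halfplane" and inj: "inj_on F halfplane"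
  obtains K :: real where "K \<ge> 0" and
    "\<And>\<xi>. \<xi> \<in> halfplane \<Longrightarrow> cmod (deriv (deriv F) \<xi>) * Re \<xi> \<le> K * cmod (deriv F \<xi>)"
proof -
  obtain K :: real where K: "K > 0" and distortion:
    "\<And>F a \<rho>. F holomorphic_on ball a \<rho> \<Longrightarrow> inj_on F (ball a \<rho>) \<Longrightarrow> 0 < \<rho> \<Longrightarrow>
       cmod (deriv (deriv F) a) * \<rho> \<le> K * cmod (deriv F a)"
    using univalent_deriv2_bound by metis
  show ?thesis
  proof (rule that[of K])
    fix \<xi> assume "\<xi> \<in> halfplane"
    then have "0 < Re \<xi>" by (simp add: halfplane_def)
    moreover have "F holomorphic_on ball \<xi> (Re \<xi>)" and "inj_on F (ball \<xi> (Re \<xi>))"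
      using holF inj ball_Re_subset_halfplane by (auto intro: holomorphic_on_subset inj_on_subset)
    ultimately show "cmod (deriv (deriv F) \<xi>) * Re \<xi> \<le> K * cmod (deriv F \<xi>)"
      using distortion by simp
  qed (use K in simp)
qed

lemma halfplane_log_deriv_bound:
  assumes holF: "F holomorphic_on halfplane" and nz: "\<And>\<xi>. \<xi> \<in> halfplane \<Longrightarrow> F \<xi> \<noteq> 0"
    and bound: "\<And>\<xi>. \<xi> \<in> halfplane \<Longrightarrow> cmod (deriv F \<xi>) * Re \<xi> \<le> K * cmod (F \<xi>)"
  obtains L where "L holomorphic_on halfplane"
    and "\<And>\<xi>. \<xi> \<in> halfplane \<Longrightarrow> ln (cmod (F \<xi>)) = Re (L \<xi>)"
    and "\<And>\<xi>. \<xi> \<in> halfplane \<Longrightarrow> cmod (deriv L \<xi>) * Re \<xi> \<le> K"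
proof -
  have "1 \<in> halfplane" by (simp add: halfplane_def)
  then obtain L where holL: "L holomorphic_on halfplane"
    and expL: "\<And>\<xi>. \<xi> \<in> halfplane \<Longrightarrow> exp (L \<xi>) = F \<xi>"
    using holomorphic_logarithm_exists[OF convex_halfplane open_halfplane holF nz] by blast
  show ?thesis
  proof (rule that[OF holL])
    fix \<xi> assume \<xi>: "\<xi> \<in> halfplane"
    show "ln (cmod (F \<xi>)) = Re (L \<xi>)" by (simp flip: expL[OF \<xi>] add: norm_exp_eq_Re)
    have "cmod (F \<xi>) * (cmod (deriv L \<xi>) * Re \<xi>) \<le> cmod (F \<xi>) * K"
      using bound[OF \<xi>] deriv_eq_mult_deriv_log[OF holL open_halfplane expL \<xi>]
      by (simp add: norm_mult algebra_simps)
    then show "cmod (deriv L \<xi>) * Re \<xi> \<le> K" using nz[OF \<xi>] by simp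
  qed
qed

lemma horizontal_increment_bound:
  assumes holL: "L holomorphic_on halfplane"
    and bound: "\<And>\<xi>. \<xi> \<in> halfplane \<Longrightarrow> cmod (deriv L \<xi>) * Re \<xi> \<le> K"
    and x1: "0 < x1" and x2: "0 < x2"
  shows "cmod (L (Complex x1 y) - L (Complex x2 y)) \<le> K * \<bar>ln x1 - ln x2\<bar>"
proof -
  text \<open>In the coordinate \<open>u = ln x\<close> the factor \<open>Re \<xi> = exp u\<close> is absorbed by the chain rule.\<close>
  define f where "f u = L (exp u + \<i> * of_real y)" for u
  have in_halfplane: "exp u + \<i> * of_real y \<in> halfplane" if "u \<in> \<real>" for u
    using that by (auto simp: halfplane_def Re_exp elim: Reals_cases)
  have "(f has_field_derivative deriv L (exp u + \<i> * of_real y) * exp u) (at u within \<real>)"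
    if "u \<in> \<real>" for u
  proof -
    have "((\<lambda>u. exp u + \<i> * of_real y) has_field_derivative exp u) (at u)"
      by (auto intro!: derivative_eq_intros)
    from DERIV_chain2[OF holomorphic_derivI[OF holL open_halfplane in_halfplane[OF that]] this]
    show ?thesis unfolding f_def by (rule has_field_derivative_at_within)
  qed
  moreover have "cmod (deriv L (exp u + \<i> * of_real y) * exp u) \<le> K" if "u \<in> \<real>" for u
  proof -
    have "cmod (exp u) = Re (exp u + \<i> * of_real y)"
      using that by (auto simp: Re_exp norm_exp_eq_Re elim: Reals_cases)
    then show ?thesis using bound[OF in_halfplane[OF that]] by (simp add: norm_mult)
  qed
  ultimately have "cmod (f (of_real (ln x1)) - f (of_real (ln x2))) \<le>
      K * cmod (of_real (ln x1) - of_real (ln x2) :: complex)"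
    by (intro field_differentiable_bound[OF convex_Reals]) auto
  moreover have "f (of_real (ln x1)) = L (Complex x1 y)" "f (of_real (ln x2)) = L (Complex x2 y)"
    using x1 x2 by (simp_all add: f_def Complex_eq exp_of_real)
  ultimately show ?thesis by (simp flip: of_real_diff)
qed

lemma vertical_increment_bound:
  assumes holL: "L holomorphic_on halfplane"
    and bound: "\<And>\<xi>. \<xi> \<in> halfplane \<Longrightarrow> cmod (deriv L \<xi>) * Re \<xi> \<le> K"
    and x: "0 < x"
  shows "cmod (L (Complex x y1) - L (Complex x y2)) \<le> K / x * \<bar>y1 - y2\<bar>"
proof -
  define f where "f u = L (of_real x + \<i> * u)" for u
  have in_halfplane: "of_real x + \<i> * u \<in> halfplane" if "u \<in> \<real>" for u
    using that x by (auto simp: halfplane_def elim: Reals_cases)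
  have "(f has_field_derivative deriv L (of_real x + \<i> * u) * \<i>) (at u within \<real>)"
    if "u \<in> \<real>" for u
  proof -
    have "((\<lambda>u. of_real x + \<i> * u) has_field_derivative \<i>) (at u)"
      by (auto intro!: derivative_eq_intros)
    from DERIV_chain2[OF holomorphic_derivI[OF holL open_halfplane in_halfplane[OF that]] this]
    show ?thesis unfolding f_def by (rule has_field_derivative_at_within)
  qed
  moreover have "cmod (deriv L (of_real x + \<i> * u) * \<i>) \<le> K / x" if "u \<in> \<real>" for u
  proof -
    have "Re (of_real x + \<i> * u) = x" using that by (auto elim: Reals_cases)
    then show ?thesis using bound[OF in_halfplane[OF that]] x by (simp add: norm_mult field_simps)
  qed
  ultimately have "cmod (f (of_real y1) - f (of_real y2)) \<le> K / x * cmod (of_real y1 - of_real y2 :: complex)"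
    by (intro field_differentiable_bound[OF convex_Reals]) auto
  moreover have "f (of_real y1) = L (Complex x y1)" "f (of_real y2) = L (Complex x y2)"
    by (simp_all add: f_def Complex_eq)
  ultimately show ?thesis by (simp flip: of_real_diff)
qed

lemma ln_norm_horizontal_bound:
  assumes holF: "F holomorphic_on halfplane" and nz: "\<And>\<xi>. \<xi> \<in> halfplane \<Longrightarrow> F \<xi> \<noteq> 0"
    and bound: "\<And>\<xi>. \<xi> \<in> halfplane \<Longrightarrow> cmod (deriv F \<xi>) * Re \<xi> \<le> K * cmod (F \<xi>)"
    and x1: "0 < x1" and x2: "0 < x2"
  shows "\<bar>ln (cmod (F (Complex x1 y))) - ln (cmod (F (Complex x2 y)))\<bar> \<le> K * \<bar>ln x1 - ln x2\<bar>"
proof -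
  obtain L where holL: "L holomorphic_on halfplane"
    and lnF: "\<And>\<xi>. \<xi> \<in> halfplane \<Longrightarrow> ln (cmod (F \<xi>)) = Re (L \<xi>)"
    and boundL: "\<And>\<xi>. \<xi> \<in> halfplane \<Longrightarrow> cmod (deriv L \<xi>) * Re \<xi> \<le> K"
    using halfplane_log_deriv_bound[OF holF nz bound] by blast
  have "Complex x1 y \<in> halfplane" "Complex x2 y \<in> halfplane" using x1 x2 by (simp_all add: halfplane_def)
  then show ?thesis
    using horizontal_increment_bound[OF holL boundL x1 x2, of y]
      abs_Re_le_cmod[of "L (Complex x1 y) - L (Complex x2 y)"]
    by (simp add: lnF)
qed

lemma ln_norm_vertical_bound:
  assumes holF: "F holomorphic_on halfplane" and nz: "\<And>\<xi>. \<xi> \<in> halfplane \<Longrightarrow> F \<xi> \<noteq> 0"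
    and bound: "\<And>\<xi>. \<xi> \<in> halfplane \<Longrightarrow> cmod (deriv F \<xi>) * Re \<xi> \<le> K * cmod (F \<xi>)"
    and x: "0 < x"
  shows "\<bar>ln (cmod (F (Complex x y1))) - ln (cmod (F (Complex x y2)))\<bar> \<le> K / x * \<bar>y1 - y2\<bar>"
proof -
  obtain L where holL: "L holomorphic_on halfplane"
    and lnF: "\<And>\<xi>. \<xi> \<in> halfplane \<Longrightarrow> ln (cmod (F \<xi>)) = Re (L \<xi>)"
    and boundL: "\<And>\<xi>. \<xi> \<in> halfplane \<Longrightarrow> cmod (deriv L \<xi>) * Re \<xi> \<le> K"
    using halfplane_log_deriv_bound[OF holF nz bound] by blast
  have "Complex x y1 \<in> halfplane" "Complex x y2 \<in> halfplane" using x by (simp_all add: halfplane_def)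
  then show ?thesis
    using vertical_increment_bound[OF holL boundL x, of y1 y2]
      abs_Re_le_cmod[of "L (Complex x y1) - L (Complex x y2)"]
    by (simp add: lnF)
qed

lemma continuous_on_ln_norm_vertical:
  assumes holF: "F holomorphic_on halfplane" and nz: "\<And>\<xi>. \<xi> \<in> halfplane \<Longrightarrow> F \<xi> \<noteq> 0"
    and x: "0 < x"
  shows "continuous_on A (\<lambda>y. ln (cmod (F (Complex x (S * y)))))"
proof -
  have "continuous_on A (\<lambda>y. Complex x (S * y))"
    unfolding Complex_eq by (intro continuous_intros)
  moreover have "(\<lambda>y. Complex x (S * y)) ` A \<subseteq> halfplane" using x by (auto simp: halfplane_def)
  ultimately have "continuous_on A (\<lambda>y. F (Complex x (S * y)))"
    using continuous_on_compose2[OF holomorphic_on_imp_continuous_on[OF holF]] by blast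
  moreover have "cmod (F (Complex x (S * y))) \<noteq> 0" for y using nz x by (simp add: halfplane_def)
  ultimately show ?thesis by (intro continuous_intros) auto
qed

lemma integrable_on_Iset:
  fixes f :: "real \<Rightarrow> real"
  assumes "continuous_on Iset f"
  shows "f integrable_on Iset"
proof -
  have "f integrable_on {-2..-1}" and "f integrable_on {1..2}"
    using assms by (auto simp: Iset_def intro: integrable_continuous_interval continuous_on_subset)
  then show ?thesis unfolding Iset_def by (intro integrable_Un) auto
qed

lemma integral_Iset_const: "integral Iset (\<lambda>y. c) = 2 * (c :: real)"
proof -
  have "((\<lambda>y. c) has_integral (2 * c)) Iset"
    using has_integral_Un[OF has_integral_const_real[of c "-2" "-1"] has_integral_const_real[of c 1 2]]
    by (simp add: Iset_def)
  then show ?thesis by (rule integral_unique)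
qed

lemma integral_Iset_exp_pos:
  fixes g :: "real \<Rightarrow> real"
  assumes "continuous_on Iset g"
  shows "integral Iset (\<lambda>y. exp (g y)) > 0"
proof -
  have "compact Iset" "Iset \<noteq> {}" unfolding Iset_def by auto
  then obtain y0 where "\<And>y. y \<in> Iset \<Longrightarrow> g y0 \<le> g y"
    using continuous_attains_inf[OF _ _ assms] by blast
  then have "integral Iset (\<lambda>y. exp (g y0)) \<le> integral Iset (\<lambda>y. exp (g y))"
    using assms by (intro integral_le integrable_on_Iset continuous_intros) auto
  moreover have "integral Iset (\<lambda>y. exp (g y0)) > 0" by (simp add: integral_Iset_const)
  ultimately show ?thesis by linarith
qed

lemma ln_integral_Iset_exp_le:
  fixes g h :: "real \<Rightarrow> real"
  assumes g: "continuous_on Iset g" and h: "continuous_on Iset h"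
    and le: "\<And>y. y \<in> Iset \<Longrightarrow> g y \<le> D + h y"
  shows "ln (integral Iset (\<lambda>y. exp (g y))) \<le> D + ln (integral Iset (\<lambda>y. exp (h y)))"
proof -
  have "integral Iset (\<lambda>y. exp (g y)) \<le> integral Iset (\<lambda>y. exp D * exp (h y))"
    using le g h by (intro integral_le integrable_on_Iset continuous_intros) (auto simp flip: exp_add)
  also have "\<dots> = exp D * integral Iset (\<lambda>y. exp (h y))" by simp
  finally have "ln (integral Iset (\<lambda>y. exp (g y))) \<le> ln (exp D * integral Iset (\<lambda>y. exp (h y)))"
    using integral_Iset_exp_pos[OF g] by simp
  also have "\<dots> = D + ln (integral Iset (\<lambda>y. exp (h y)))"
    using integral_Iset_exp_pos[OF h] by (simp add: ln_mult)
  finally show ?thesis .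
qed

lemma ln_integral_Iset_exp_lipschitz:
  fixes g h :: "real \<Rightarrow> real"
  assumes g: "continuous_on Iset g" and h: "continuous_on Iset h"
    and close: "\<And>y. y \<in> Iset \<Longrightarrow> \<bar>g y - h y\<bar> \<le> D"
  shows "\<bar>ln (integral Iset (\<lambda>y. exp (g y))) - ln (integral Iset (\<lambda>y. exp (h y)))\<bar> \<le> D"
  using ln_integral_Iset_exp_le[OF g h, of D] ln_integral_Iset_exp_le[OF h g, of D] close
  by (force simp: abs_le_iff)

lemma ln_integral_Iset_exp_near_const:
  fixes g :: "real \<Rightarrow> real"
  assumes g: "continuous_on Iset g" and close: "\<And>y. y \<in> Iset \<Longrightarrow> \<bar>g y - c\<bar> \<le> D"
  shows "\<bar>ln (integral Iset (\<lambda>y. exp (g y))) - (c + ln 2)\<bar> \<le> D"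
  using ln_integral_Iset_exp_lipschitz[OF g continuous_on_const close]
  by (simp add: integral_Iset_const ln_mult)

text \<open>\<open>ln_rescaled_deriv \<phi> S x y = ln \<bar>(phiT \<phi> S)' (x / S + i y)\<bar>\<close>.\<close>
definition ln_rescaled_deriv :: "(complex \<Rightarrow> complex) \<Rightarrow> real \<Rightarrow> real \<Rightarrow> real \<Rightarrow> real" where
  "ln_rescaled_deriv \<phi> S x y =
     ln S + ln (cmod (deriv \<phi> (Complex x (S * y)))) - ln (cmod (\<phi> (of_real S)))"

lemma deriv_phiT:
  assumes hol: "\<phi> holomorphic_on halfplane" and S: "S > 0" and x: "x > 0"
  shows "deriv (phiT \<phi> S) (Complex x y) =
           of_real S * deriv \<phi> (Complex (S * x) (S * y)) / of_real (cmod (\<phi> (of_real S)))"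
proof -
  have "of_real S * Complex x y = Complex (S * x) (S * y)"
    by (simp add: Complex_eq algebra_simps)
  moreover have "Complex (S * x) (S * y) \<in> halfplane" using S x by (simp add: halfplane_def)
  ultimately have "(\<phi> has_field_derivative deriv \<phi> (Complex (S * x) (S * y))) (at (of_real S * Complex x y))"
    using holomorphic_derivI[OF hol open_halfplane] by simp
  moreover have "((\<lambda>\<xi>. of_real S * \<xi>) has_field_derivative of_real S) (at (Complex x y))"
    by (auto intro!: derivative_eq_intros)
  ultimately have "((\<lambda>\<xi>. \<phi> (of_real S * \<xi>)) has_field_derivative
      deriv \<phi> (Complex (S * x) (S * y)) * of_real S) (at (Complex x y))"
    by (rule DERIV_chain2)
  from DERIV_cdivide[OF this, of "of_real (cmod (\<phi> (of_real S)))"]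
  show ?thesis unfolding phiT_def by (simp add: DERIV_imp_deriv mult.commute)
qed

lemma beta_phiT_eq:
  assumes hol: "\<phi> holomorphic_on halfplane"
    and nz: "\<And>\<xi>. \<xi> \<in> halfplane \<Longrightarrow> \<phi> \<xi> \<noteq> 0" and nz': "\<And>\<xi>. \<xi> \<in> halfplane \<Longrightarrow> deriv \<phi> \<xi> \<noteq> 0"
    and S: "S > 0" and r: "r > 0"
  shows "beta (phiT \<phi> S) r t =
           ln (integral Iset (\<lambda>y. exp (t * ln_rescaled_deriv \<phi> S (S * r) y))) / ln (1 / r)"
proof -
  have "cmod (deriv (phiT \<phi> S) (Complex r y)) powr t = exp (t * ln_rescaled_deriv \<phi> S (S * r) y)"
    for y
  proof -
    have "cmod (deriv \<phi> (Complex (S * r) (S * y))) > 0" "cmod (\<phi> (of_real S)) > 0"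
      using nz nz' S r by (simp_all add: halfplane_def)
    then show ?thesis
      using S r by (simp add: deriv_phiT[OF hol S r] norm_mult norm_divide powr_def
          ln_mult ln_div ln_rescaled_deriv_def mult.commute)
  qed
  then show ?thesis by (simp add: beta_def)
qed

lemma ln_rescaled_deriv_growth:
  assumes hol: "\<phi> holomorphic_on halfplane"
    and nz: "\<And>\<xi>. \<xi> \<in> halfplane \<Longrightarrow> \<phi> \<xi> \<noteq> 0" and nz': "\<And>\<xi>. \<xi> \<in> halfplane \<Longrightarrow> deriv \<phi> \<xi> \<noteq> 0"
    and C: "\<And>\<xi>. \<xi> \<in> halfplane \<Longrightarrow> cmod (deriv \<phi> \<xi>) * Re \<xi> \<le> C * cmod (\<phi> \<xi>)"
    and K: "\<And>\<xi>. \<xi> \<in> halfplane \<Longrightarrow> cmod (deriv (deriv \<phi>) \<xi>) * Re \<xi> \<le> K * cmod (deriv \<phi> \<xi>)"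
    and K0: "K \<ge> 0" and S: "S \<ge> 1" and y: "\<bar>y\<bar> \<le> 2"
  shows "\<bar>ln_rescaled_deriv \<phi> S 1 y - ln_rescaled_deriv \<phi> 1 1 0\<bar> \<le> (1 + C + 2 * K) * ln S + 2 * K"
proof -
  have holD: "deriv \<phi> holomorphic_on halfplane" using holomorphic_deriv[OF hol open_halfplane] .
  note horizontal = ln_norm_horizontal_bound[OF holD nz' K] and vertical = ln_norm_vertical_bound[OF holD nz' K]
  let ?d = "\<lambda>z. ln (cmod (deriv \<phi> z))"
  text \<open>Move from \<open>1 + i S y\<close> to \<open>1\<close> along the path \<open>1 + i S y \<rightarrow> S + i S y \<rightarrow> S \<rightarrow> 1\<close>, whose
    vertical leg costs only \<open>2 K\<close> because it runs along \<open>Re \<xi> = S\<close>.\<close>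
  have "\<bar>?d (Complex 1 (S * y)) - ?d (Complex S (S * y))\<bar> \<le> K * ln S"
    using horizontal[of 1 S "S * y"] S by simp
  moreover have "\<bar>?d (Complex S (S * y)) - ?d (Complex S 0)\<bar> \<le> 2 * K"
  proof -
    have "\<bar>?d (Complex S (S * y)) - ?d (Complex S 0)\<bar> \<le> K / S * \<bar>S * y - 0\<bar>"
      using vertical[of S "S * y" 0] S by simp
    also have "\<dots> = K * \<bar>y\<bar>" using S by (simp add: abs_mult)
    also have "\<dots> \<le> 2 * K" using y K0 by (simp add: mult_left_mono mult.commute)
    finally show ?thesis .
  qed
  moreover have "\<bar>?d (Complex S 0) - ?d (Complex 1 0)\<bar> \<le> K * ln S"
    using horizontal[of S 1 0] S by simp
  moreover have "\<bar>ln (cmod (\<phi> (Complex S 0))) - ln (cmod (\<phi> (Complex 1 0)))\<bar> \<le> C * ln S"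
    using ln_norm_horizontal_bound[OF hol nz C, of S 1 0] S by simp
  moreover have "ln S \<ge> 0" using S by simp
  moreover have "(1 + C + 2 * K) * ln S = ln S + C * ln S + 2 * (K * ln S)"
    by (simp add: algebra_simps)
  ultimately show ?thesis
    unfolding ln_rescaled_deriv_def complex_of_real_def by (simp add: abs_le_iff)
qed

lemma ln_rescaled_deriv_shift:
  assumes hol: "\<phi> holomorphic_on halfplane" and nz': "\<And>\<xi>. \<xi> \<in> halfplane \<Longrightarrow> deriv \<phi> \<xi> \<noteq> 0"
    and K: "\<And>\<xi>. \<xi> \<in> halfplane \<Longrightarrow> cmod (deriv (deriv \<phi>) \<xi>) * Re \<xi> \<le> K * cmod (deriv \<phi> \<xi>)"
    and R: "R > 0"
  shows "\<bar>ln_rescaled_deriv \<phi> S R y - ln_rescaled_deriv \<phi> S 1 y\<bar> \<le> K * \<bar>ln R\<bar>"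
  using ln_norm_horizontal_bound[OF holomorphic_deriv[OF hol open_halfplane] nz' K R, of 1 "S * y"]
  by (simp add: ln_rescaled_deriv_def)

lemma Limsup_eq_if_diff_tendsto_0:
  fixes u v :: "real \<Rightarrow> real"
  assumes "((\<lambda>x. u x - v x) \<longlongrightarrow> 0) F" and "F \<noteq> bot"
  shows "Limsup F (\<lambda>x. ereal (u x)) = Limsup F (\<lambda>x. ereal (v x))"
proof -
  have le: "Limsup F (\<lambda>x. ereal (f x)) \<le> Limsup F (\<lambda>x. ereal (g x))"
    if "((\<lambda>x. f x - g x) \<longlongrightarrow> 0) F" for f g :: "real \<Rightarrow> real"
  proof (rule ereal_le_epsilon2)
    fix e :: real assume "0 < e"
    with that have "eventually (\<lambda>x. ereal (f x) \<le> ereal (g x) + ereal e) F"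
      by (auto dest: tendstoD elim!: eventually_mono simp: dist_norm)
    then have "Limsup F (\<lambda>x. ereal (f x)) \<le> Limsup F (\<lambda>x. ereal (g x) + ereal e)"
      by (rule Limsup_mono)
    also have "\<dots> = Limsup F (\<lambda>x. ereal (g x)) + ereal e"
      using \<open>F \<noteq> bot\<close> by (intro Limsup_add_ereal_right) auto
    finally show "Limsup F (\<lambda>x. ereal (f x)) \<le> Limsup F (\<lambda>x. ereal (g x)) + ereal e" .
  qed
  have "((\<lambda>x. v x - u x) \<longlongrightarrow> 0) F"
    using tendsto_minus[OF assms(1)] by simp
  then show ?thesis using le[OF assms(1)] by (auto intro: antisym le)
qed

lemma Limsup_at_top_scale:
  fixes f :: "real \<Rightarrow> ereal"
  assumes R: "R > 0"
  shows "Limsup at_top (\<lambda>T. f (R * T)) = Limsup at_top f"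
proof -
  have "filtermap (\<lambda>T. R * T) at_top = at_top"
  proof (rule filtermap_fun_inverse[where g = "\<lambda>T. inverse R * T"])
    show "filterlim (\<lambda>T. inverse R * T) at_top at_top" "filterlim (\<lambda>T. R * T) at_top at_top"
      using R by (auto intro!: filterlim_tendsto_pos_mult_at_top[OF tendsto_const] simp: filterlim_ident)
  qed (use R in simp)
  moreover have "inj (\<lambda>T. R * T)" using R by (auto intro: injI)
  ultimately show ?thesis using Limsup_filtermap_eq[of "\<lambda>T. R * T" at_top f] by simp
qed

lemma Limsup_at_right_0_inverse:
  fixes f :: "real \<Rightarrow> ereal"
  shows "Limsup (at_right 0) (\<lambda>r. f (inverse r)) = Limsup at_top f"
  using Limsup_filtermap_eq[of inverse "at_right 0" f]
  by (simp add: inj_on_def flip: at_top_to_right)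

lemma diff_ratio_bound:
  fixes a b p q r D M :: real
  assumes p: "p > 0" and q: "q > 0" and ab: "\<bar>a - b\<bar> \<le> D" and b: "\<bar>b\<bar> \<le> M * q"
    and qr: "q = r + p"
  shows "\<bar>a / p - b / q\<bar> \<le> (D + M * \<bar>r\<bar>) / p"
proof -
  have "\<bar>b / q\<bar> * \<bar>r\<bar> \<le> M * \<bar>r\<bar>"
    using b q by (intro mult_right_mono) (auto simp: abs_div pos_divide_le_eq)
  then have "\<bar>(a - b) + (b / q) * r\<bar> \<le> D + M * \<bar>r\<bar>"
    using ab abs_triangle_ineq[of "a - b" "b / q * r"] by (simp add: abs_mult)
  moreover have "a / p - b / q = ((a - b) + (b / q) * r) / p"
    using p q qr by (simp add: field_simps)
  ultimately show ?thesis using p by (simp add: abs_div divide_right_mono)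
qed

lemma ln_ge_one_if_ge_exp_1:
  fixes S :: real
  assumes "S \<ge> exp 1"
  shows "ln S \<ge> 1"
  using assms ln_ge_iff[of S 1] by (smt (verit) exp_gt_zero)

lemma Limsup_ln_ratio_finite:
  fixes u :: "real \<Rightarrow> real"
  assumes uM: "\<And>S. S \<ge> exp 1 \<Longrightarrow> \<bar>u S\<bar> \<le> M * ln S"
  shows "Limsup at_top (\<lambda>S. ereal (u S / ln S)) \<noteq> \<infinity>"
    and "Limsup at_top (\<lambda>S. ereal (u S / ln S)) \<noteq> -\<infinity>"
proof -
  have "eventually (\<lambda>S. - M \<le> u S / ln S \<and> u S / ln S \<le> M) at_top"
    using eventually_ge_at_top[of "exp 1"]
  proof eventually_elim
    case (elim S)
    then have "ln S \<ge> 1" by (rule ln_ge_one_if_ge_exp_1)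
    then have "\<bar>u S / ln S\<bar> \<le> M" using uM[OF elim] by (simp add: abs_div pos_divide_le_eq)
    then show ?case by (auto simp only: abs_le_iff)
  qed
  then have "Limsup at_top (\<lambda>S. ereal (u S / ln S)) \<le> ereal M"
    and "ereal (- M) \<le> Liminf at_top (\<lambda>S. ereal (u S / ln S))"
    by (auto intro!: Limsup_bounded Liminf_bounded elim!: eventually_mono)
  moreover have "Liminf at_top (\<lambda>S. ereal (u S / ln S)) \<le> Limsup at_top (\<lambda>S. ereal (u S / ln S))"
    by (rule Liminf_le_Limsup) simp
  ultimately show "Limsup at_top (\<lambda>S. ereal (u S / ln S)) \<noteq> \<infinity>"
    and "Limsup at_top (\<lambda>S. ereal (u S / ln S)) \<noteq> -\<infinity>" by auto
qed

lemma ln_ratio_rescaled_diff_tendsto_0: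
  fixes u v :: "real \<Rightarrow> real"
  assumes uM: "\<And>S. S \<ge> exp 1 \<Longrightarrow> \<bar>u S\<bar> \<le> M * ln S"
    and v: "\<And>S. S > 0 \<Longrightarrow> \<bar>v S - u S\<bar> \<le> D" and R: "R > 0"
  shows "((\<lambda>T. v (R * T) / ln T - u (R * T) / ln (R * T)) \<longlongrightarrow> 0) at_top"
proof (rule Lim_null_comparison)
  show "((\<lambda>T. (D + M * \<bar>ln R\<bar>) / ln T) \<longlongrightarrow> 0) at_top"
    by (rule tendsto_divide_0[OF tendsto_const filterlim_at_top_imp_at_infinity[OF ln_at_top]])
  show "eventually (\<lambda>T. norm (v (R * T) / ln T - u (R * T) / ln (R * T)) \<le> (D + M * \<bar>ln R\<bar>) / ln T) at_top"
    using eventually_ge_at_top[of "max (exp 1) (exp 1 / R)"]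
  proof eventually_elim
    case (elim T)
    then have "T \<ge> exp 1" and "R * T \<ge> exp 1" using R by (auto simp: field_simps)
    moreover have "T > 1" using \<open>T \<ge> exp 1\<close> by (smt (verit) one_less_exp_iff)
    ultimately have "ln T \<ge> 1" "ln (R * T) \<ge> 1" "ln (R * T) = ln R + ln T"
      using ln_ge_one_if_ge_exp_1[of T] ln_ge_one_if_ge_exp_1[of "R * T"] ln_mult_pos[OF R, of T]
      by simp_all
    then have "\<bar>v (R * T) / ln T - u (R * T) / ln (R * T)\<bar> \<le> (D + M * \<bar>ln R\<bar>) / ln T"
      using v[of "R * T"] uM[OF \<open>R * T \<ge> exp 1\<close>] R \<open>T > 1\<close>
      by (intro diff_ratio_bound) auto
    then show ?case by simp
  qed
qed

lemma Limsup_ln_ratio_rescaled: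
  fixes u v :: "real \<Rightarrow> real"
  assumes u: "\<And>S. S \<ge> 1 \<Longrightarrow> \<bar>u S\<bar> \<le> a * ln S + b"
    and v: "\<And>S. S > 0 \<Longrightarrow> \<bar>v S - u S\<bar> \<le> D" and R: "R > 0"
  shows "Limsup at_top (\<lambda>S. ereal (u S / ln S)) \<noteq> \<infinity>"
    and "Limsup at_top (\<lambda>S. ereal (u S / ln S)) \<noteq> -\<infinity>"
    and "Limsup (at_right 0) (\<lambda>r. ereal (v (R / r) / ln (1 / r))) =
         Limsup at_top (\<lambda>S. ereal (u S / ln S))"
proof -
  have uM: "\<bar>u S\<bar> \<le> (\<bar>a\<bar> + \<bar>b\<bar>) * ln S" if "S \<ge> exp 1" for S
  proof -
    have "S \<ge> 1" using that by (smt (verit) one_le_exp_iff)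
    then have "\<bar>u S\<bar> \<le> \<bar>a\<bar> * ln S + \<bar>b\<bar> * 1"
      using u[of S] by (smt (verit) ln_ge_zero mult_right_mono abs_ge_self)
    also have "\<dots> \<le> (\<bar>a\<bar> + \<bar>b\<bar>) * ln S"
      using mult_left_mono[OF ln_ge_one_if_ge_exp_1[OF that], of "\<bar>b\<bar>"] by (simp add: distrib_right)
    finally show ?thesis .
  qed
  then show "Limsup at_top (\<lambda>S. ereal (u S / ln S)) \<noteq> \<infinity>"
    and "Limsup at_top (\<lambda>S. ereal (u S / ln S)) \<noteq> -\<infinity>"
    using Limsup_ln_ratio_finite by blast+
  have "Limsup at_top (\<lambda>T. ereal (v (R * T) / ln T)) = Limsup at_top (\<lambda>T. ereal (u (R * T) / ln (R * T)))"
    by (rule Limsup_eq_if_diff_tendsto_0[OF ln_ratio_rescaled_diff_tendsto_0[OF uM v R]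
          trivial_limit_at_top_linorder])
  then show "Limsup (at_right 0) (\<lambda>r. ereal (v (R / r) / ln (1 / r))) =
      Limsup at_top (\<lambda>S. ereal (u S / ln S))"
    using Limsup_at_right_0_inverse[of "\<lambda>T. ereal (v (R * T) / ln T)"]
      Limsup_at_top_scale[OF R, of "\<lambda>S. ereal (u S / ln S)"]
    by (simp add: divide_inverse)
qed

lemma continuous_on_ln_rescaled_deriv:
  assumes hol: "\<phi> holomorphic_on halfplane" and nz': "\<And>\<xi>. \<xi> \<in> halfplane \<Longrightarrow> deriv \<phi> \<xi> \<noteq> 0"
    and x: "x > 0"
  shows "continuous_on A (ln_rescaled_deriv \<phi> S x)"
  unfolding ln_rescaled_deriv_def[abs_def]
  by (intro continuous_on_diff continuous_on_add continuous_on_const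
      continuous_on_ln_norm_vertical[OF holomorphic_deriv[OF hol open_halfplane] nz' x])

lemma ln_integral_rescaled_deriv_growth:
  assumes hol: "\<phi> holomorphic_on halfplane"
    and nz: "\<And>\<xi>. \<xi> \<in> halfplane \<Longrightarrow> \<phi> \<xi> \<noteq> 0" and nz': "\<And>\<xi>. \<xi> \<in> halfplane \<Longrightarrow> deriv \<phi> \<xi> \<noteq> 0"
    and C: "\<And>\<xi>. \<xi> \<in> halfplane \<Longrightarrow> cmod (deriv \<phi> \<xi>) * Re \<xi> \<le> C * cmod (\<phi> \<xi>)"
    and K: "\<And>\<xi>. \<xi> \<in> halfplane \<Longrightarrow> cmod (deriv (deriv \<phi>) \<xi>) * Re \<xi> \<le> K * cmod (deriv \<phi> \<xi>)"
    and K0: "K \<ge> 0" and S: "S \<ge> 1"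
  shows "\<bar>ln (integral Iset (\<lambda>y. exp (t * ln_rescaled_deriv \<phi> S 1 y)))\<bar> \<le>
           \<bar>t\<bar> * (1 + C + 2 * K) * ln S + (\<bar>t * ln_rescaled_deriv \<phi> 1 1 0\<bar> + ln 2 + 2 * \<bar>t\<bar> * K)"
proof -
  let ?c = "t * ln_rescaled_deriv \<phi> 1 1 0"
  let ?U = "ln (integral Iset (\<lambda>y. exp (t * ln_rescaled_deriv \<phi> S 1 y)))"
  have "\<bar>t * ln_rescaled_deriv \<phi> S 1 y - ?c\<bar> \<le> \<bar>t\<bar> * ((1 + C + 2 * K) * ln S + 2 * K)"
    if "y \<in> Iset" for y
  proof -
    have "\<bar>y\<bar> \<le> 2" using that by (auto simp: Iset_def)
    then show ?thesis
      using ln_rescaled_deriv_growth[OF hol nz nz' C K K0 S]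
      by (simp flip: right_diff_distrib add: abs_mult mult_left_mono)
  qed
  then have "\<bar>?U - (?c + ln 2)\<bar> \<le> \<bar>t\<bar> * ((1 + C + 2 * K) * ln S + 2 * K)"
    using continuous_on_ln_rescaled_deriv[OF hol nz']
    by (intro ln_integral_Iset_exp_near_const continuous_intros) auto
  then have "\<bar>?U\<bar> \<le> \<bar>t\<bar> * ((1 + C + 2 * K) * ln S + 2 * K) + (\<bar>?c\<bar> + ln 2)"
    using abs_triangle_ineq[of "?U - (?c + ln 2)" "?c + ln 2"] abs_triangle_ineq[of ?c "ln 2"]
    by simp
  then show ?thesis by (simp add: algebra_simps)
qed

lemma ln_integral_rescaled_deriv_shift:
  assumes hol: "\<phi> holomorphic_on halfplane" and nz': "\<And>\<xi>. \<xi> \<in> halfplane \<Longrightarrow> deriv \<phi> \<xi> \<noteq> 0"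
    and K: "\<And>\<xi>. \<xi> \<in> halfplane \<Longrightarrow> cmod (deriv (deriv \<phi>) \<xi>) * Re \<xi> \<le> K * cmod (deriv \<phi> \<xi>)"
    and R: "R > 0"
  shows "\<bar>ln (integral Iset (\<lambda>y. exp (t * ln_rescaled_deriv \<phi> S R y))) -
          ln (integral Iset (\<lambda>y. exp (t * ln_rescaled_deriv \<phi> S 1 y)))\<bar> \<le> \<bar>t\<bar> * (K * \<bar>ln R\<bar>)"
  using continuous_on_ln_rescaled_deriv[OF hol nz'] R
    ln_rescaled_deriv_shift[OF hol nz' K R]
  by (intro ln_integral_Iset_exp_lipschitz continuous_intros)
     (auto simp flip: right_diff_distrib simp: abs_mult mult_left_mono)

lemma Limsup_beta_phiT:
  fixes \<phi> :: "complex \<Rightarrow> complex" and t R :: real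
  assumes hol: "\<phi> holomorphic_on halfplane" and inj: "inj_on \<phi> halfplane"
    and nz: "\<And>\<xi>. \<xi> \<in> halfplane \<Longrightarrow> \<phi> \<xi> \<noteq> 0" and R: "R > 0"
  shows "Limsup at_top (\<lambda>T. ereal (beta (phiT \<phi> T) (1 / T) t)) \<noteq> \<infinity>
       \<and> Limsup at_top (\<lambda>T. ereal (beta (phiT \<phi> T) (1 / T) t)) \<noteq> -\<infinity>
       \<and> Limsup (at_right 0) (\<lambda>r. ereal (beta (phiT \<phi> (R / r)) r t))
           = Limsup at_top (\<lambda>T. ereal (beta (phiT \<phi> T) (1 / T) t))"
proof -
  have nz': "deriv \<phi> \<xi> \<noteq> 0" if "\<xi> \<in> halfplane" for \<xi>
    using holomorphic_injective_imp_regular[OF hol open_halfplane inj that] .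
  obtain C where C: "\<And>\<xi>. \<xi> \<in> halfplane \<Longrightarrow> cmod (deriv \<phi> \<xi>) * Re \<xi> \<le> C * cmod (\<phi> \<xi>)"
    using halfplane_deriv_bound[OF hol inj] nz by (metis imageE)
  obtain K where K0: "K \<ge> 0"
    and K: "\<And>\<xi>. \<xi> \<in> halfplane \<Longrightarrow> cmod (deriv (deriv \<phi>) \<xi>) * Re \<xi> \<le> K * cmod (deriv \<phi> \<xi>)"
    using halfplane_deriv2_bound[OF hol inj] by blast
  define u where "u S = ln (integral Iset (\<lambda>y. exp (t * ln_rescaled_deriv \<phi> S 1 y)))" for S
  define v where "v S = ln (integral Iset (\<lambda>y. exp (t * ln_rescaled_deriv \<phi> S R y)))" for S
  have "beta (phiT \<phi> T) (1 / T) t = u T / ln T" if "T > 0" for T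
    using beta_phiT_eq[OF hol nz nz' that, of "1 / T"] that by (simp add: u_def)
  then have "Limsup at_top (\<lambda>T. ereal (beta (phiT \<phi> T) (1 / T) t)) = Limsup at_top (\<lambda>S. ereal (u S / ln S))"
    by (intro Limsup_eq eventually_mono[OF eventually_gt_at_top[of 0]]) simp
  moreover have "beta (phiT \<phi> (R / r)) r t = v (R / r) / ln (1 / r)" if "r > 0" for r
    using beta_phiT_eq[OF hol nz nz' _ that, of "R / r"] that R by (simp add: v_def)
  then have "Limsup (at_right 0) (\<lambda>r. ereal (beta (phiT \<phi> (R / r)) r t)) =
      Limsup (at_right 0) (\<lambda>r. ereal (v (R / r) / ln (1 / r)))"
    by (intro Limsup_eq eventually_mono[OF eventually_at_right_less[of 0]]) simp
  moreover note Limsup_ln_ratio_rescaled[OF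
      ln_integral_rescaled_deriv_growth[OF hol nz nz' C K K0, where t = t]
      ln_integral_rescaled_deriv_shift[OF hol nz' K R, where t = t] R]
  ultimately show ?thesis by (simp add: u_def v_def)
qed

theorem lemma3p2:
  fixes \<Omega> :: "complex set" and \<gamma> :: real and \<phi> :: "complex \<Rightarrow> complex"
    and t R :: real
  assumes \<gamma>: "0 < \<gamma>" "\<gamma> < 1"
    and \<Omega>_open: "open \<Omega>" and \<Omega>_sc: "simply_connected \<Omega>"
    and \<Omega>_ne: "\<Omega> \<noteq> {}" and \<Omega>_unb: "\<not> bounded \<Omega>"
    and \<Omega>_sub: "\<Omega> \<subseteq> {z. cmod z > exp \<gamma>}"
    and \<phi>_hol: "\<phi> holomorphic_on halfplane"
    and \<phi>_inj: "inj_on \<phi> halfplane"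
    and \<phi>_onto: "\<phi> ` halfplane = \<Omega>"
    and \<phi>_inf: "\<And>\<xi>. (\<forall>n. \<xi> n \<in> halfplane) \<Longrightarrow>
               filterlim (\<lambda>n. cmod (\<xi> n)) at_top sequentially \<Longrightarrow>
               filterlim (\<lambda>n. cmod (\<phi> (\<xi> n))) at_top sequentially"
    and \<phi>_M: "\<exists>M. \<forall>\<^sub>F T in at_top. \<forall>\<xi>\<in>Qbox T - Qbox (T / 8). \<forall>\<xi>'\<in>Qbox T - Qbox (T / 8).
               cmod (\<phi> \<xi>) \<le> M * cmod (\<phi> \<xi>')"
    and R: "R \<ge> \<gamma>"
  shows "Limsup at_top (\<lambda>T. ereal (beta (phiT \<phi> T) (1 / T) t)) \<noteq> \<infinity>
       \<and> Limsup at_top (\<lambda>T. ereal (beta (phiT \<phi> T) (1 / T) t)) \<noteq> -\<infinity>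
       \<and> Limsup (at_right 0) (\<lambda>r. ereal (beta (phiT \<phi> (R / r)) r t))
           = Limsup at_top (\<lambda>T. ereal (beta (phiT \<phi> T) (1 / T) t))"
proof (rule Limsup_beta_phiT[OF \<phi>_hol \<phi>_inj])
  show "R > 0" using \<gamma> R by linarith
  fix \<xi> assume "\<xi> \<in> halfplane"
  then have "cmod (\<phi> \<xi>) > exp \<gamma>" using \<phi>_onto \<Omega>_sub by blast
  then show "\<phi> \<xi> \<noteq> 0" by (metis exp_gt_zero norm_zero not_less_iff_gr_or_eq)
qed

end
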